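(* Let $H\in\mathbb{R}^{n\times d}$ have rank $h$, $\Sigma\in\mathbb{R}^{n\times n}$ symmetric positive definite, $y\in\mathbb{R}^n$, $J\ge2$, and fix an initial ensemble $v_0^{(1)},\dots,v_0^{(J)}\in\mathbb{R}^d$ with empirical covariance $\Gamma_0$. Let $\varepsilon_i^{(j)}$, $i\ge0$, $j=1,\dots,J$, be i.i.d. $\mathcal{N}(0,\Sigma)$ random vectors. Define $C_0=H\Gamma_0H^\top$, $C_{i+1}=\Sigma-\Sigma(C_i+\Sigma)^{-1}\Sigma$, $\widetilde{\mathcal{M}}_i=\Sigma(C_i+\Sigma)^{-1}$, and the idealized misfits $$\tilde\theta_0^{(j)}=Hv_0^{(j)}-y,\qquad \tilde\theta_{i+1}^{(j)}=\widetilde{\mathcal{M}}_i\tilde\theta_i^{(j)}+(I-\widetilde{\mathcal{M}}_i)\varepsilon_i^{(j)}.$$ With $\widetilde{\mathcal{P}},\widetilde{\mathcal{Q}},\widetilde{\mathcal{N}}$ as defined in the context, for every $j=1,\dots,J$: (a) $\mathbb{E}[\|\widetilde{\mathcal{P}}\tilde\theta_i^{(j)}\|]=\mathcal{O}(i^{-1/2})$ as $i\to\infty$; (b) $\widetilde{\mathcal{Q}}\tilde\theta_i^{(j)}=\widetilde{\mathcal{Q}}\tilde\theta_0^{(j)}$ for all $i\ge0$; (c) $\widetilde{\mathcal{N}}\tilde\theta_i^{(j)}=\widetilde{\mathcal{N}}\tilde\theta_0^{(j)}$ for all $i\ge0$.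
   Context: Empirical covariance: $\Gamma_0=\frac1{J-1}\sum_j(v_0^{(j)}-\bar v_0)(v_0^{(j)}-\bar v_0)^\top$, $\bar v_0=\frac1J\sum_jv_0^{(j)}$. Let $r$ be the number of positive eigenvalues of the pencil $C_0\tilde w=\tilde\delta\Sigma\tilde w$. Let $\tilde w_1,\dots,\tilde w_n$ be a basis of $\mathbb{R}^n$ with $\tilde w_k^\top\Sigma\tilde w_l$ equal to $1$ if $k=l$ and $0$ otherwise, such that each $\tilde w_\ell$ is a generalized eigenvector of $(C_i,\Sigma)$ for every $i\ge0$; $\tilde w_1,\dots,\tilde w_r\in\mathsf{Ran}(\Sigma^{-1}H)$ correspond to positive eigenvalues; $\tilde w_{r+1},\dots,\tilde w_h\in\mathsf{Ran}(\Sigma^{-1}H)$ correspond to eigenvalue zero; $\tilde w_{h+1},\dots,\tilde w_n\in\mathsf{Ker}(H^\top)$ correspond to eigenvalue zero. With $\widetilde W=[\tilde w_1,\dots,\tilde w_n]$ and $\widetilde W_{k:l}$ its columns $k$ through $l$, set $\widetilde{\mathcal{P}}=\Sigma\widetilde W_{1:r}\widetilde W_{1:r}^\top$, $\widetilde{\mathcal{Q}}=\Sigma\widetilde W_{r+1:h}\widetilde W_{r+1:h}^\top$, $\widetilde{\mathcal{N}}=\Sigma\widetilde W_{h+1:n}\widetilde W_{h+1:n}^\top$. The expectation is over the perturbations $\varepsilon_i^{(j)}$. *)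

theory Defs
  imports "HOL-Analysis.Analysis" "HOL-Probability.Probability"
begin

definition outer :: "real^'m \<Rightarrow> real^'k \<Rightarrow> real^'k^'m" where
  "outer u v = (\<chi> i l. u $ i * v $ l)"

definition ens_mean :: "nat \<Rightarrow> (nat \<Rightarrow> real^'d) \<Rightarrow> real^'d" where
  "ens_mean J v = (1 / real J) *\<^sub>R (\<Sum>j=1..J. v j)"

definition emp_cov :: "nat \<Rightarrow> (nat \<Rightarrow> real^'d) \<Rightarrow> real^'d^'d" where
  "emp_cov J v = (1 / (real J - 1)) *\<^sub>R
     (\<Sum>j=1..J. outer (v j - ens_mean J v) (v j - ens_mean J v))"

primrec Cseq :: "real^'n^'n \<Rightarrow> real^'n^'n \<Rightarrow> nat \<Rightarrow> real^'n^'n" where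
  "Cseq S C0 0 = C0"
| "Cseq S C0 (Suc i) = S - S ** matrix_inv (Cseq S C0 i + S) ** S"

definition Mseq :: "real^'n^'n \<Rightarrow> real^'n^'n \<Rightarrow> nat \<Rightarrow> real^'n^'n" where
  "Mseq S C0 i = S ** matrix_inv (Cseq S C0 i + S)"

primrec misfit :: "real^'n^'n \<Rightarrow> real^'n^'n \<Rightarrow> real^'n \<Rightarrow> (nat \<Rightarrow> real^'n) \<Rightarrow> nat \<Rightarrow> real^'n" where
  "misfit S C0 t0 e 0 = t0"
| "misfit S C0 t0 e (Suc i) =
     Mseq S C0 i *v misfit S C0 t0 e i + (mat 1 - Mseq S C0 i) *v e i"

definition mvn_centered :: "'w measure \<Rightarrow> real^'n^'n \<Rightarrow> ('w \<Rightarrow> real^'n) \<Rightarrow> bool" where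
  "mvn_centered M S X \<longleftrightarrow> X \<in> borel_measurable M \<and>
     (\<forall>a. a \<noteq> 0 \<longrightarrow>
        distributed M lborel (\<lambda>w. a \<bullet> X w) (normal_density 0 (sqrt (a \<bullet> (S *v a)))))"

definition wproj :: "real^'n^'n \<Rightarrow> (nat \<Rightarrow> real^'n) \<Rightarrow> nat set \<Rightarrow> real^'n^'n" where
  "wproj S w K = S ** (\<Sum>k\<in>K. outer (w k) (w k))"

end

theory Submission
  imports Defs
begin

text \<open>
  In the \<Sigma>-orthonormal basis w_k all C_i are simultaneously diagonal: if C_0 w_k = d_k \<Sigma> w_k,
  the Riccati step C \<mapsto> \<Sigma> - \<Sigma>(C + \<Sigma>)^(-1)\<Sigma> maps the generalised eigenvalue \<delta> to
  \<delta>/(1 + \<delta>), so C_i w_k = d_k/(1 + i d_k) \<Sigma> w_k. Consequently the k-th coordinate of the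
  misfit solves a scalar recursion with solution
  w_k \<bullet> \<theta>_i = (w_k \<bullet> \<theta>_0 + d_k \<Sum>_(l<i) w_k \<bullet> \<epsilon>_l) / (1 + i d_k).
  For d_k = 0, i.e. in the ranges of Q and N, it is constant. For d_k > 0 the noise sum is
  N(0, i) because w_k has \<Sigma>-norm 1, so its mean modulus is at most sqrt i and the coordinate
  decays like i^(-1/2).
\<close>

lemma transpose_add: "transpose (A + B) = transpose A + transpose (B :: 'a::semiring_1^'n^'m)"
  by (simp add: transpose_def vec_eq_iff)

lemma transpose_diff: "transpose (A - B) = transpose A - transpose (B :: 'a::ring_1^'n^'m)"
  by (simp add: transpose_def vec_eq_iff)

lemma transpose_sum:
  "finite K \<Longrightarrow> transpose (\<Sum>k\<in>K. f k) = (\<Sum>k\<in>K. transpose (f k :: 'a::semiring_1^'n^'m))"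
  by (induction K rule: finite_induct) (simp_all add: transpose_add transpose_def vec_eq_iff)

lemma matrix_inv:
  fixes A :: "'a::semiring_1^'n^'m"
  assumes "invertible A"
  shows matrix_inv_right: "A ** matrix_inv A = mat 1"
    and matrix_inv_left: "matrix_inv A ** A = mat 1"
proof -
  have "\<exists>A'. A ** A' = mat 1 \<and> A' ** A = mat 1" using assms by (simp add: invertible_def)
  then have "A ** matrix_inv A = mat 1 \<and> matrix_inv A ** A = mat 1"
    unfolding matrix_inv_def by (rule someI_ex)
  then show "A ** matrix_inv A = mat 1" "matrix_inv A ** A = mat 1" by auto
qed

lemma symmetric_matrix_inv:
  fixes A :: "real^'n^'n"
  assumes "invertible A" "transpose A = A"
  shows "transpose (matrix_inv A) = matrix_inv A"
proof -
  have "transpose (matrix_inv A) ** A = mat 1"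
    by (metis assms matrix_inv_right matrix_transpose_mul transpose_mat)
  then have "transpose (matrix_inv A) ** (A ** matrix_inv A) = matrix_inv A"
    by (simp add: matrix_mul_assoc)
  then show ?thesis by (simp add: matrix_inv_right[OF assms(1)])
qed

lemma inner_symmetric_matrix:
  fixes A :: "real^'n^'n"
  assumes "transpose A = A"
  shows "x \<bullet> (A *v y) = (A *v x) \<bullet> y"
  by (metis assms dot_lmul_matrix transpose_matrix_vector)

lemma outer_mult_vector: "outer u v *v x = (v \<bullet> x) *\<^sub>R (u :: real^'m)"
  for v x :: "real^'k"
  by (auto simp: outer_def matrix_vector_mult_def vec_eq_iff inner_vec_def sum_distrib_left
      mult_ac intro!: sum.cong)

lemma transpose_outer_self: "transpose (outer u u) = outer u (u :: real^'k)"
  by (simp add: transpose_def outer_def vec_eq_iff mult.commute)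

lemma symmetric_emp_cov: "transpose (emp_cov J v) = emp_cov J v"
  by (simp add: emp_cov_def transpose_scalar transpose_sum transpose_outer_self)

lemma sum_matrix_vector_mult:
  "finite K \<Longrightarrow> (\<Sum>k\<in>K. f k) *v x = (\<Sum>k\<in>K. f k *v (x :: real^'m))"
  by (induction K rule: finite_induct) (simp_all add: matrix_vector_mult_add_rdistrib)

lemma wproj_mult_vector:
  "finite K \<Longrightarrow> wproj S w K *v x = (\<Sum>k\<in>K. (w k \<bullet> x) *\<^sub>R (S *v w k))"
  by (simp add: wproj_def matrix_vector_mul_assoc[symmetric] sum_matrix_vector_mult
      outer_mult_vector linear_sum[OF matrix_vector_mul_linear] o_def matrix_vector_mult_scaleR)

lemma Riccati_scalar_step:
  fixes d n :: real
  assumes "0 \<le> d" "0 \<le> n"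
  shows "d / (1 + n * d) / (1 + d / (1 + n * d)) = d / (1 + (n + 1) * d)"
proof -
  have pos: "0 < 1 + n * d" using assms by (simp add: add_pos_nonneg)
  then have "1 + d / (1 + n * d) = (1 + (n + 1) * d) / (1 + n * d)"
    by (simp add: field_simps)
  then show ?thesis using pos by simp
qed

lemma misfit_scalar_step:
  fixes d n a s x :: real
  assumes "0 \<le> d" "0 \<le> n"
  shows "(1 + n * d) / (1 + (n + 1) * d) * ((a + d * s) / (1 + n * d))
           + (x - (1 + n * d) / (1 + (n + 1) * d) * x)
         = (a + d * (s + x)) / (1 + (n + 1) * d)"
proof -
  have "0 < 1 + n * d" "0 < 1 + (n + 1) * d"
    using assms by (simp_all add: add_pos_nonneg)
  then have "(1 + n * d) / (1 + (n + 1) * d) * ((a + d * s) / (1 + n * d))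
               = (a + d * s) / (1 + (n + 1) * d)"
    and "x - (1 + n * d) / (1 + (n + 1) * d) * x = d * x / (1 + (n + 1) * d)"
    by (simp, simp add: field_simps)
  then show ?thesis by (simp add: add_divide_distrib distrib_left)
qed

lemma (in prob_space) nn_integral_abs_normal_le:
  assumes X: "distributed M lborel X (normal_density 0 \<sigma>)" and \<sigma>: "0 < \<sigma>"
  shows "(\<integral>\<^sup>+\<omega>. ennreal \<bar>X \<omega>\<bar> \<partial>M) \<le> ennreal \<sigma>"
proof -
  have "has_bochner_integral lborel (\<lambda>x. normal_density 0 \<sigma> x * \<bar>x - 0\<bar> ^ (2 * 0 + 1))
          (2 ^ 0 * \<sigma> ^ (2 * 0 + 1) * fact 0 * sqrt (2 / pi))"
    using \<sigma> by (rule normal_moment_abs_odd)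
  then have first_abs_moment:
    "has_bochner_integral lborel (\<lambda>x. normal_density 0 \<sigma> x * \<bar>x\<bar>) (\<sigma> * sqrt (2 / pi))"
    by simp
  have "(\<integral>\<^sup>+\<omega>. ennreal \<bar>X \<omega>\<bar> \<partial>M) = (\<integral>\<^sup>+x. ennreal (normal_density 0 \<sigma> x * \<bar>x\<bar>) \<partial>lborel)"
    using distributed_nn_integral[OF X, of "\<lambda>x. ennreal \<bar>x\<bar>"] by (simp add: ennreal_mult)
  also have "\<dots> = ennreal (\<sigma> * sqrt (2 / pi))"
    using nn_integral_eq_integral[OF integrable.intros[OF first_abs_moment]]
      has_bochner_integral_integral_eq[OF first_abs_moment] by simp
  also have "\<dots> \<le> ennreal \<sigma>"
    using \<sigma> pi_gt3 by (intro ennreal_leI mult_left_le) simp_all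
  finally show ?thesis .
qed

lemma coordinate_decay_le:
  fixes t d n :: real
  assumes d: "0 < d" and n: "1 \<le> n"
  shows "(\<bar>t\<bar> + d * sqrt n) / (1 + n * d) \<le> (\<bar>t\<bar> / d + 1) / sqrt n"
proof -
  have "1 \<le> sqrt n" using n by (rule real_sqrt_ge_one)
  moreover have "sqrt n * sqrt n = n" using n by simp
  moreover from calculation have "sqrt n \<le> n"
    using mult_right_mono[of 1 "sqrt n" "sqrt n"] by simp
  ultimately have sqrt_n: "1 \<le> sqrt n" "sqrt n * sqrt n = n" "sqrt n \<le> n" by auto
  have "(\<bar>t\<bar> + d * sqrt n) / (1 + n * d) \<le> (\<bar>t\<bar> + d * sqrt n) / (n * d)"
    using d n by (intro divide_left_mono) (simp_all add: add_nonneg_nonneg add_pos_pos)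
  also have "\<dots> = (\<bar>t\<bar> / d) / n + 1 / sqrt n"
    using d n sqrt_n(2) by (simp add: field_simps)
  also have "\<dots> \<le> (\<bar>t\<bar> / d) / sqrt n + 1 / sqrt n"
    using d sqrt_n by (intro add_right_mono divide_left_mono) simp_all
  also have "\<dots> = (\<bar>t\<bar> / d + 1) / sqrt n" by (simp add: add_divide_distrib)
  finally show ?thesis .
qed

context prob_space
begin

context
  fixes S :: "real^'n^'n" and eps :: "nat \<Rightarrow> nat \<Rightarrow> 'a \<Rightarrow> real^'n" and J j :: nat
  assumes indep: "indep_vars (\<lambda>_. borel) (\<lambda>(i, j). eps i j) (UNIV \<times> {1..J})"
    and gauss: "\<And>i j. j \<in> {1..J} \<Longrightarrow> mvn_centered M S (eps i j)"
    and j: "j \<in> {1..J}"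
begin

lemma measurable_perturbation[measurable]: "eps l j \<in> borel_measurable M"
  using gauss[OF j] by (simp add: mvn_centered_def)

lemma distributed_sum_perturbations:
  assumes a: "a \<bullet> (S *v a) = 1" and i: "0 < i"
  shows "distributed M lborel (\<lambda>\<omega>. \<Sum>l<i. a \<bullet> eps l j \<omega>) (normal_density 0 (sqrt (real i)))"
proof -
  define I where "I = {..<i} \<times> {j}"
  define X where "X = (\<lambda>p \<omega>. a \<bullet> (case p of (l, j) \<Rightarrow> eps l j) \<omega>)"
  have "indep_vars (\<lambda>_. borel) X I"
    unfolding X_def using j
    by (intro indep_vars_subset[OF indep_vars_compose2[OF indep]]) (auto simp: I_def)
  moreover have "distributed M lborel (X p) (normal_density 0 1)" if "p \<in> I" for p
  proof -
    obtain l where p: "p = (l, j)" using \<open>p \<in> I\<close> by (auto simp: I_def)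
    have "a \<noteq> 0" using a by auto
    then have "distributed M lborel (\<lambda>\<omega>. a \<bullet> eps l j \<omega>) (normal_density 0 (sqrt (a \<bullet> (S *v a))))"
      using gauss[OF j, of l] unfolding mvn_centered_def by blast
    then show ?thesis by (simp add: X_def p a)
  qed
  ultimately have "distributed M lborel (\<lambda>\<omega>. \<Sum>p\<in>I. X p \<omega>)
      (normal_density (\<Sum>p\<in>I. 0) (sqrt (\<Sum>p\<in>I. 1\<^sup>2)))"
    using i by (intro sum_indep_normal) (auto simp: I_def)
  moreover have "(\<Sum>p\<in>I. X p \<omega>) = (\<Sum>l<i. a \<bullet> eps l j \<omega>)" for \<omega>
  proof -
    have "I = (\<lambda>l. (l, j)) ` {..<i}" by (auto simp: I_def)
    moreover have "inj_on (\<lambda>l. (l, j)) {..<i}" by (auto simp: inj_on_def)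
    ultimately show ?thesis by (simp add: sum.reindex X_def)
  qed
  ultimately show ?thesis by (simp add: I_def)
qed

lemma nn_integral_abs_coordinate_le:
  assumes a: "a \<bullet> (S *v a) = 1" and i: "0 < i" and D: "0 \<le> D"
  shows "(\<integral>\<^sup>+\<omega>. ennreal \<bar>(t + D * (\<Sum>l<i. a \<bullet> eps l j \<omega>)) / (1 + real i * D)\<bar> \<partial>M)
           \<le> ennreal ((\<bar>t\<bar> + D * sqrt (real i)) / (1 + real i * D))"
proof -
  define Y where "Y = (\<lambda>\<omega>. \<Sum>l<i. a \<bullet> eps l j \<omega>)"
  define p where "p = 1 + real i * D"
  have Y_meas[measurable]: "Y \<in> borel_measurable M" unfolding Y_def by measurable
  have p: "0 < p" using D by (simp add: p_def add_pos_nonneg)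
  have "(\<integral>\<^sup>+\<omega>. ennreal \<bar>(t + D * Y \<omega>) / p\<bar> \<partial>M)
      \<le> (\<integral>\<^sup>+\<omega>. ennreal (\<bar>t\<bar> / p) + ennreal (D / p) * ennreal \<bar>Y \<omega>\<bar> \<partial>M)"
  proof (rule nn_integral_mono)
    fix \<omega>
    have "\<bar>(t + D * Y \<omega>) / p\<bar> = \<bar>t + D * Y \<omega>\<bar> / p"
      using p by simp
    also have "\<dots> \<le> (\<bar>t\<bar> + D * \<bar>Y \<omega>\<bar>) / p"
      using p D abs_triangle_ineq[of t "D * Y \<omega>"] by (intro divide_right_mono) (simp_all add: abs_mult)
    also have "\<dots> = \<bar>t\<bar> / p + D / p * \<bar>Y \<omega>\<bar>" by (simp add: add_divide_distrib)
    finally have "ennreal \<bar>(t + D * Y \<omega>) / p\<bar> \<le> ennreal (\<bar>t\<bar> / p + D / p * \<bar>Y \<omega>\<bar>)"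
      by (rule ennreal_leI)
    also have "\<dots> = ennreal (\<bar>t\<bar> / p) + ennreal (D / p) * ennreal \<bar>Y \<omega>\<bar>"
      using p D by (simp only: ennreal_plus ennreal_mult abs_ge_zero divide_nonneg_pos
          mult_nonneg_nonneg)
    finally show "ennreal \<bar>(t + D * Y \<omega>) / p\<bar> \<le> ennreal (\<bar>t\<bar> / p) + ennreal (D / p) * ennreal \<bar>Y \<omega>\<bar>" .
  qed
  also have "\<dots> = ennreal (\<bar>t\<bar> / p) + ennreal (D / p) * (\<integral>\<^sup>+\<omega>. ennreal \<bar>Y \<omega>\<bar> \<partial>M)"
    by (simp add: nn_integral_add nn_integral_cmult emeasure_space_1)
  also have "\<dots> \<le> ennreal (\<bar>t\<bar> / p) + ennreal (D / p) * ennreal (sqrt (real i))"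
    using i unfolding Y_def
    by (intro add_left_mono mult_left_mono nn_integral_abs_normal_le
        distributed_sum_perturbations[OF a]) simp_all
  also have "\<dots> = ennreal ((\<bar>t\<bar> + D * sqrt (real i)) / p)"
    using p D by (simp only: add_divide_distrib times_divide_eq_left[symmetric] ennreal_plus
        ennreal_mult abs_ge_zero divide_nonneg_pos mult_nonneg_nonneg real_sqrt_ge_zero of_nat_0_le_iff)
  finally show ?thesis by (simp add: Y_def p_def)
qed

end

end

locale S_orthonormal_basis =
  fixes S :: "real^'n^'n" and w :: "nat \<Rightarrow> real^'n"
  assumes S_sym: "transpose S = S"
    and S_pos_def: "\<And>x. x \<noteq> 0 \<Longrightarrow> 0 < x \<bullet> (S *v x)"
    and orthonormal: "\<And>k l. k \<in> {1..CARD('n)} \<Longrightarrow> l \<in> {1..CARD('n)} \<Longrightarrow>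
                        w k \<bullet> (S *v w l) = (if k = l then 1 else 0)"
begin

definition pencil_eigenvalues :: "real^'n^'n \<Rightarrow> (nat \<Rightarrow> real) \<Rightarrow> bool" where
  "pencil_eigenvalues C c \<longleftrightarrow>
     transpose C = C \<and> (\<forall>k\<in>{1..CARD('n)}. C *v w k = c k *\<^sub>R (S *v w k))"

lemma eq_0_if_coordinates_eq_0:
  assumes z: "\<And>k. k \<in> {1..CARD('n)} \<Longrightarrow> w k \<bullet> z = 0"
  shows "z = 0"
proof -
  define K where "K = {1..CARD('n)}"
  have inj: "inj_on w K"
  proof (rule inj_onI)
    fix k l assume "k \<in> K" "l \<in> K" "w k = w l"
    then show "k = l" using orthonormal[of k k] orthonormal[of k l] by (auto simp: K_def split: if_splits)
  qed
  have "independent (w ` K)"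
  proof (rule independent_if_scalars_zero)
    fix f x assume sum0: "(\<Sum>x\<in>w ` K. f x *\<^sub>R x) = 0" and "x \<in> w ` K"
    then obtain l where l: "l \<in> K" "x = w l" by auto
    have "0 = (\<Sum>k\<in>K. f (w k) *\<^sub>R w k) \<bullet> (S *v w l)"
      using sum0 by (simp add: sum.reindex[OF inj])
    also have "\<dots> = (\<Sum>k\<in>K. if k = l then f (w l) else 0)"
      unfolding inner_sum_left
      by (rule sum.cong) (use l in \<open>auto simp: orthonormal K_def\<close>)
    also have "\<dots> = f x" using l by (simp add: K_def)
    finally show "f x = 0" by simp
  qed (simp add: K_def)
  moreover have "card (w ` K) = CARD('n)"
    using card_image[OF inj] by (simp add: K_def)
  ultimately have "UNIV \<subseteq> span (w ` K)"
    by (intro card_ge_dim_independent) auto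
  then have "z \<in> span (w ` K)" by blast
  moreover have "orthogonal z (w k)" if "k \<in> K" for k
    using z[OF that[unfolded K_def]] by (simp add: orthogonal_def inner_commute)
  ultimately have "orthogonal z z"
    by (intro orthogonal_to_span[of z "w ` K"]) blast+
  then show ?thesis by (simp add: orthogonal_def)
qed

lemma pencil_eigenvalues_add_S:
  "pencil_eigenvalues C c \<Longrightarrow> pencil_eigenvalues (C + S) (\<lambda>k. 1 + c k)"
  by (simp add: pencil_eigenvalues_def transpose_add S_sym matrix_vector_mult_add_rdistrib
      scaleR_add_left)

lemma invertible_if_pencil_eigenvalues_nonzero:
  assumes A: "pencil_eigenvalues A c" and c: "\<And>k. k \<in> {1..CARD('n)} \<Longrightarrow> c k \<noteq> 0"
  shows "invertible A"
proof -
  have "x = 0" if Ax: "A *v x = 0" for x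
  proof -
    have "S *v x = 0"
    proof (rule eq_0_if_coordinates_eq_0)
      fix k assume k: "k \<in> {1..CARD('n)}"
      have "0 = (A *v w k) \<bullet> x"
        using A Ax inner_symmetric_matrix[of A "w k" x] by (simp add: pencil_eigenvalues_def)
      also have "\<dots> = c k * (w k \<bullet> (S *v x))"
        using A k by (simp add: pencil_eigenvalues_def inner_symmetric_matrix[OF S_sym])
      finally show "w k \<bullet> (S *v x) = 0" using c[OF k] by simp
    qed
    then show "x = 0" using S_pos_def by force
  qed
  then show ?thesis
    using matrix_left_invertible_ker invertible_left_inverse by blast
qed

context
  fixes C :: "real^'n^'n" and c :: "nat \<Rightarrow> real"
  assumes C: "pencil_eigenvalues C c" and c_nonneg: "\<And>k. k \<in> {1..CARD('n)} \<Longrightarrow> 0 \<le> c k"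
begin

lemma invertible_add_S: "invertible (C + S)"
proof (rule invertible_if_pencil_eigenvalues_nonzero[OF pencil_eigenvalues_add_S[OF C]])
  show "1 + c k \<noteq> 0" if "k \<in> {1..CARD('n)}" for k
    using c_nonneg[OF that] by linarith
qed

lemma symmetric_matrix_inv_add_S: "transpose (matrix_inv (C + S)) = matrix_inv (C + S)"
  using C by (intro symmetric_matrix_inv invertible_add_S)
    (simp add: pencil_eigenvalues_def transpose_add S_sym)

lemma matrix_inv_add_S_S_w:
  assumes k: "k \<in> {1..CARD('n)}"
  shows "matrix_inv (C + S) *v (S *v w k) = (1 / (1 + c k)) *\<^sub>R w k"
proof -
  have "(C + S) *v w k = (1 + c k) *\<^sub>R (S *v w k)"
    using pencil_eigenvalues_add_S[OF C] k by (simp add: pencil_eigenvalues_def)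
  then have eq: "(1 + c k) *\<^sub>R (matrix_inv (C + S) *v (S *v w k)) = w k"
    by (metis matrix_vector_mult_scaleR matrix_vector_mul_assoc matrix_inv_left[OF invertible_add_S]
        matrix_vector_mul_lid)
  have "1 + c k \<noteq> 0" using c_nonneg[OF k] by linarith
  then have "matrix_inv (C + S) *v (S *v w k)
      = (1 / (1 + c k)) *\<^sub>R ((1 + c k) *\<^sub>R (matrix_inv (C + S) *v (S *v w k)))"
    by simp
  then show ?thesis by (simp only: eq)
qed

lemma inner_S_matrix_inv_add_S:
  assumes k: "k \<in> {1..CARD('n)}"
  shows "w k \<bullet> ((S ** matrix_inv (C + S)) *v v) = (w k \<bullet> v) / (1 + c k)"
proof -
  have "w k \<bullet> ((S ** matrix_inv (C + S)) *v v) = (matrix_inv (C + S) *v (S *v w k)) \<bullet> v"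
    by (simp add: matrix_vector_mul_assoc[symmetric] inner_symmetric_matrix[OF S_sym]
        inner_symmetric_matrix[OF symmetric_matrix_inv_add_S])
  then show ?thesis
    by (simp add: matrix_inv_add_S_S_w[OF k] divide_inverse mult.commute)
qed

lemma pencil_eigenvalues_Riccati_step:
  "pencil_eigenvalues (S - S ** matrix_inv (C + S) ** S) (\<lambda>k. c k / (1 + c k))"
  unfolding pencil_eigenvalues_def
proof (intro conjI ballI)
  show "transpose (S - S ** matrix_inv (C + S) ** S) = S - S ** matrix_inv (C + S) ** S"
    by (simp add: transpose_diff matrix_transpose_mul S_sym symmetric_matrix_inv_add_S
        matrix_mul_assoc)
next
  fix k assume k: "k \<in> {1..CARD('n)}"
  have "(S - S ** matrix_inv (C + S) ** S) *v w k = (1 - 1 / (1 + c k)) *\<^sub>R (S *v w k)"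
    by (simp add: matrix_vector_mult_diff_rdistrib matrix_vector_mul_assoc[symmetric]
        matrix_inv_add_S_S_w[OF k] matrix_vector_mult_scaleR algebra_simps)
  also have "1 - 1 / (1 + c k) = c k / (1 + c k)"
    using c_nonneg[OF k] by (simp add: field_simps)
  finally show "(S - S ** matrix_inv (C + S) ** S) *v w k = (c k / (1 + c k)) *\<^sub>R (S *v w k)" .
qed

end

lemma pencil_eigenvalues_cong:
  "(\<And>k. k \<in> {1..CARD('n)} \<Longrightarrow> c k = c' k) \<Longrightarrow> pencil_eigenvalues C c = pencil_eigenvalues C c'"
  by (simp add: pencil_eigenvalues_def)

lemma pencil_eigenvalues_Rayleigh:
  assumes "transpose C = C"
    and "\<And>k. k \<in> {1..CARD('n)} \<Longrightarrow> \<exists>\<delta>. C *v w k = \<delta> *\<^sub>R (S *v w k)"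
  shows "pencil_eigenvalues C (\<lambda>k. w k \<bullet> (C *v w k))"
  using assms by (fastforce simp: pencil_eigenvalues_def orthonormal)

lemma obtain_pencil_eigenvalues:
  assumes "transpose C = C" and r: "r \<le> CARD('n)"
    and pos: "\<And>k. k \<in> {1..r} \<Longrightarrow> \<exists>\<delta>>0. C *v w k = \<delta> *\<^sub>R (S *v w k)"
    and zero: "\<And>k. k \<in> {r+1..CARD('n)} \<Longrightarrow> C *v w k = 0"
  obtains d where "pencil_eigenvalues C d" and "\<And>k. k \<in> {1..CARD('n)} \<Longrightarrow> 0 \<le> d k"
    and "\<And>k. k \<in> {1..r} \<Longrightarrow> 0 < d k" and "\<And>k. k \<in> {r+1..CARD('n)} \<Longrightarrow> d k = 0"
proof -
  define d where "d k = w k \<bullet> (C *v w k)" for k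
  have d_pos: "0 < d k" if k: "k \<in> {1..r}" for k
  proof -
    obtain \<delta> where "0 < \<delta>" "C *v w k = \<delta> *\<^sub>R (S *v w k)" using pos[OF k] by blast
    then show ?thesis using k r orthonormal[of k k] by (simp add: d_def)
  qed
  have d_zero: "d k = 0" if "k \<in> {r+1..CARD('n)}" for k
    using zero[OF that] by (simp add: d_def)
  have "\<exists>\<delta>. C *v w k = \<delta> *\<^sub>R (S *v w k)" if "k \<in> {1..CARD('n)}" for k
    using that pos zero by (cases "k \<le> r") (auto intro: exI[of _ 0])
  then have "pencil_eigenvalues C d"
    unfolding d_def by (intro pencil_eigenvalues_Rayleigh assms)
  moreover have "0 \<le> d k" if "k \<in> {1..CARD('n)}" for k
    using that d_pos d_zero by (cases "k \<le> r") (auto intro: less_imp_le)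
  ultimately show thesis using that d_pos d_zero by blast
qed

context
  fixes C0 :: "real^'n^'n" and d :: "nat \<Rightarrow> real"
  assumes C0: "pencil_eigenvalues C0 d" and d_nonneg: "\<And>k. k \<in> {1..CARD('n)} \<Longrightarrow> 0 \<le> d k"
begin

lemma pencil_eigenvalues_Cseq:
  "pencil_eigenvalues (Cseq S C0 i) (\<lambda>k. d k / (1 + real i * d k))"
proof (induction i)
  case 0
  show ?case using C0 by simp
next
  case (Suc i)
  have "pencil_eigenvalues (Cseq S C0 (Suc i))
          (\<lambda>k. d k / (1 + real i * d k) / (1 + d k / (1 + real i * d k)))"
    using pencil_eigenvalues_Riccati_step[OF Suc.IH] d_nonneg by simp
  also have "?this \<longleftrightarrow> ?case"
    by (intro pencil_eigenvalues_cong, subst Riccati_scalar_step) (simp_all add: d_nonneg)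
  finally show ?case .
qed

lemma inner_Mseq:
  assumes k: "k \<in> {1..CARD('n)}"
  shows "w k \<bullet> (Mseq S C0 i *v v)
           = (1 + real i * d k) / (1 + (real i + 1) * d k) * (w k \<bullet> v)"
proof -
  have "w k \<bullet> (Mseq S C0 i *v v) = (w k \<bullet> v) / (1 + d k / (1 + real i * d k))"
    unfolding Mseq_def using pencil_eigenvalues_Cseq d_nonneg k
    by (intro inner_S_matrix_inv_add_S) simp_all
  moreover have "0 < 1 + real i * d k" "0 < 1 + (real i + 1) * d k"
    using d_nonneg[OF k] by (simp_all add: add_pos_nonneg)
  ultimately show ?thesis by (simp add: field_simps)
qed

lemma inner_misfit:
  assumes k: "k \<in> {1..CARD('n)}"
  shows "w k \<bullet> misfit S C0 t0 e i
           = (w k \<bullet> t0 + d k * (\<Sum>l<i. w k \<bullet> e l)) / (1 + real i * d k)"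
proof (induction i)
  case 0
  show ?case by simp
next
  case (Suc i)
  let ?q = "(1 + real i * d k) / (1 + (real i + 1) * d k)"
  have "w k \<bullet> misfit S C0 t0 e (Suc i)
          = ?q * (w k \<bullet> misfit S C0 t0 e i) + (w k \<bullet> e i - ?q * (w k \<bullet> e i))"
    by (simp add: inner_add_right inner_diff_right matrix_vector_mult_diff_rdistrib inner_Mseq[OF k])
  also have "\<dots> = (w k \<bullet> t0 + d k * (\<Sum>l<Suc i. w k \<bullet> e l)) / (1 + real (Suc i) * d k)"
    unfolding Suc.IH using misfit_scalar_step[OF d_nonneg[OF k], of "real i"] by (simp add: add.commute)
  finally show ?case .
qed

lemma wproj_misfit_eq_initial:
  assumes K: "K \<subseteq> {1..CARD('n)}" and d_0: "\<And>k. k \<in> K \<Longrightarrow> d k = 0"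
  shows "wproj S w K *v misfit S C0 t0 e i = wproj S w K *v t0"
proof -
  have "finite K" using K finite_subset by blast
  moreover have "w k \<bullet> misfit S C0 t0 e i = w k \<bullet> t0" if "k \<in> K" for k
    using inner_misfit[of k] K d_0 that by auto
  ultimately show ?thesis by (simp add: wproj_mult_vector)
qed

lemma measurable_inner_misfit:
  assumes "\<And>l. e l \<in> borel_measurable M" and k: "k \<in> {1..CARD('n)}"
  shows "(\<lambda>\<omega>. w k \<bullet> misfit S C0 t0 (\<lambda>l. e l \<omega>) i) \<in> borel_measurable M"
  using assms by (simp add: inner_misfit[OF k])

lemma nn_integral_abs_inner_misfit_le:
  fixes M :: "'w measure" and eps :: "nat \<Rightarrow> nat \<Rightarrow> 'w \<Rightarrow> real^'n"
  assumes M: "prob_space M"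
    and indep: "prob_space.indep_vars M (\<lambda>_. borel) (\<lambda>(i, j). eps i j) (UNIV \<times> {1..J})"
    and gauss: "\<And>i j. j \<in> {1..J} \<Longrightarrow> mvn_centered M S (eps i j)"
    and j: "j \<in> {1..J}" and k: "k \<in> {1..CARD('n)}" and d_pos: "0 < d k" and i: "1 \<le> i"
  shows "(\<integral>\<^sup>+\<omega>. ennreal \<bar>w k \<bullet> misfit S C0 t0 (\<lambda>l. eps l j \<omega>) i\<bar> \<partial>M)
           \<le> ennreal ((\<bar>w k \<bullet> t0\<bar> / d k + 1) / sqrt (real i))"
proof -
  have "w k \<bullet> (S *v w k) = 1" using k orthonormal by simp
  then have "(\<integral>\<^sup>+\<omega>. ennreal \<bar>w k \<bullet> misfit S C0 t0 (\<lambda>l. eps l j \<omega>) i\<bar> \<partial>M)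
      \<le> ennreal ((\<bar>w k \<bullet> t0\<bar> + d k * sqrt (real i)) / (1 + real i * d k))"
    unfolding inner_misfit[OF k] using i d_pos
    by (intro prob_space.nn_integral_abs_coordinate_le[OF M indep gauss j]) simp_all
  also have "\<dots> \<le> ennreal ((\<bar>w k \<bullet> t0\<bar> / d k + 1) / sqrt (real i))"
    using i by (intro ennreal_leI coordinate_decay_le d_pos) simp
  finally show ?thesis .
qed

lemma nn_integral_norm_wproj_misfit_le:
  fixes M :: "'w measure" and eps :: "nat \<Rightarrow> nat \<Rightarrow> 'w \<Rightarrow> real^'n"
  assumes M: "prob_space M"
    and indep: "prob_space.indep_vars M (\<lambda>_. borel) (\<lambda>(i, j). eps i j) (UNIV \<times> {1..J})"
    and gauss: "\<And>i j. j \<in> {1..J} \<Longrightarrow> mvn_centered M S (eps i j)"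
    and j: "j \<in> {1..J}" and K: "K \<subseteq> {1..CARD('n)}" and d_pos: "\<And>k. k \<in> K \<Longrightarrow> 0 < d k"
    and i: "1 \<le> i"
  shows "(\<integral>\<^sup>+\<omega>. ennreal (norm (wproj S w K *v misfit S C0 t0 (\<lambda>l. eps l j \<omega>) i)) \<partial>M)
           \<le> ennreal ((\<Sum>k\<in>K. norm (S *v w k) * (\<bar>w k \<bullet> t0\<bar> / d k + 1)) / sqrt (real i))"
proof -
  define \<theta> where "\<theta> \<omega> = misfit S C0 t0 (\<lambda>l. eps l j \<omega>) i" for \<omega>
  have "finite K" using K finite_subset by blast
  have [measurable]: "(\<lambda>\<omega>. w k \<bullet> \<theta> \<omega>) \<in> borel_measurable M" if "k \<in> K" for k
    unfolding \<theta>_def using gauss[OF j] subsetD[OF K that]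
    by (intro measurable_inner_misfit) (simp_all add: mvn_centered_def)
  have "norm (wproj S w K *v \<theta> \<omega>) \<le> (\<Sum>k\<in>K. norm (S *v w k) * \<bar>w k \<bullet> \<theta> \<omega>\<bar>)" for \<omega>
    using norm_sum[of "\<lambda>k. (w k \<bullet> \<theta> \<omega>) *\<^sub>R (S *v w k)" K] \<open>finite K\<close>
    by (simp add: wproj_mult_vector mult.commute)
  then have "(\<integral>\<^sup>+\<omega>. ennreal (norm (wproj S w K *v \<theta> \<omega>)) \<partial>M)
      \<le> (\<integral>\<^sup>+\<omega>. (\<Sum>k\<in>K. ennreal (norm (S *v w k)) * ennreal \<bar>w k \<bullet> \<theta> \<omega>\<bar>) \<partial>M)"
    by (intro nn_integral_mono) (simp add: ennreal_mult'[symmetric] ennreal_leI)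
  also have "\<dots> = (\<Sum>k\<in>K. ennreal (norm (S *v w k)) * (\<integral>\<^sup>+\<omega>. ennreal \<bar>w k \<bullet> \<theta> \<omega>\<bar> \<partial>M))"
    by (simp add: nn_integral_sum nn_integral_cmult)
  also have "\<dots> \<le> (\<Sum>k\<in>K. ennreal (norm (S *v w k)) * ennreal ((\<bar>w k \<bullet> t0\<bar> / d k + 1) / sqrt (real i)))"
    unfolding \<theta>_def using K d_pos i
    by (intro sum_mono mult_left_mono nn_integral_abs_inner_misfit_le[OF M indep gauss j]) auto
  also have "\<dots> = ennreal ((\<Sum>k\<in>K. norm (S *v w k) * (\<bar>w k \<bullet> t0\<bar> / d k + 1)) / sqrt (real i))"
    using d_pos by (simp add: ennreal_mult[symmetric] sum_divide_distrib less_imp_le)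
  finally show ?thesis by (simp add: \<theta>_def)
qed

end

end

theorem theorem4p7:
  fixes H :: "real^'d^'n" and S :: "real^'n^'n" and y :: "real^'n"
    and J :: nat and v0 :: "nat \<Rightarrow> real^'d"
    and M :: "'w measure" and eps :: "nat \<Rightarrow> nat \<Rightarrow> 'w \<Rightarrow> real^'n"
    and w :: "nat \<Rightarrow> real^'n" and r h :: nat
  assumes rankH: "rank H = h"
    and S_sym: "transpose S = S"
    and S_pd: "\<forall>x. x \<noteq> 0 \<longrightarrow> 0 < x \<bullet> (S *v x)"
    and J2: "J \<ge> 2"
    and prob: "prob_space M"
    and indep: "prob_space.indep_vars M (\<lambda>_. borel) (\<lambda>(i, j). eps i j) (UNIV \<times> {1..J})"
    and gauss: "\<And>i j. j \<in> {1..J} \<Longrightarrow> mvn_centered M S (eps i j)"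
    and rh: "r \<le> h" "h \<le> CARD('n)"
    and w_orth: "\<And>k l. k \<in> {1..CARD('n)} \<Longrightarrow> l \<in> {1..CARD('n)} \<Longrightarrow>
                   w k \<bullet> (S *v w l) = (if k = l then 1 else 0)"
    and w_eig: "\<And>k i. k \<in> {1..CARD('n)} \<Longrightarrow>
                   \<exists>\<delta>. Cseq S (H ** emp_cov J v0 ** transpose H) i *v w k = \<delta> *\<^sub>R (S *v w k)"
    and w_pos: "\<And>k. k \<in> {1..r} \<Longrightarrow> \<exists>\<delta>>0.
                   (H ** emp_cov J v0 ** transpose H) *v w k = \<delta> *\<^sub>R (S *v w k)"
    and w_zero: "\<And>k. k \<in> {r+1..CARD('n)} \<Longrightarrow>
                   (H ** emp_cov J v0 ** transpose H) *v w k = 0"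
    and w_ran: "\<And>k. k \<in> {1..h} \<Longrightarrow> w k \<in> range (\<lambda>x. matrix_inv S *v (H *v x))"
    and w_ker: "\<And>k. k \<in> {h+1..CARD('n)} \<Longrightarrow> transpose H *v w k = 0"
  defines "\<theta> \<equiv> (\<lambda>i j \<omega>. misfit S (H ** emp_cov J v0 ** transpose H) (H *v v0 j - y) (\<lambda>l. eps l j \<omega>) i)"
    and "P \<equiv> wproj S w {1..r}"
    and "Q \<equiv> wproj S w {r+1..h}"
    and "N \<equiv> wproj S w {h+1..CARD('n)}"
  shows "\<forall>j\<in>{1..J}.
           (\<exists>c::real. \<forall>\<^sub>F i in sequentially.
               (\<integral>\<^sup>+ \<omega>. ennreal (norm (P *v \<theta> i j \<omega>)) \<partial>M) \<le> ennreal (c / sqrt (real i)))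
         \<and> (\<forall>i. \<forall>\<omega>\<in>space M. Q *v \<theta> i j \<omega> = Q *v \<theta> 0 j \<omega>)
         \<and> (\<forall>i. \<forall>\<omega>\<in>space M. N *v \<theta> i j \<omega> = N *v \<theta> 0 j \<omega>)"
proof -
  \<comment> \<open>Neither are rankH, J2, w_ran and w_ker.\<close>
  interpret S_orthonormal_basis S w
    using S_sym S_pd w_orth by unfold_locales auto
  define C0 where "C0 = H ** emp_cov J v0 ** transpose H"
  have C0_sym: "transpose C0 = C0"
    by (simp add: C0_def matrix_transpose_mul symmetric_emp_cov matrix_mul_assoc)
  obtain d where C0: "pencil_eigenvalues C0 d" and d_nonneg: "\<And>k. k \<in> {1..CARD('n)} \<Longrightarrow> 0 \<le> d k"
    and d_pos: "\<And>k. k \<in> {1..r} \<Longrightarrow> 0 < d k" and d_zero: "\<And>k. k \<in> {r+1..CARD('n)} \<Longrightarrow> d k = 0"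
    using obtain_pencil_eigenvalues[OF C0_sym order_trans[OF rh]] w_pos w_zero
    unfolding C0_def by blast
  have Q_const: "wproj S w {r+1..h} *v misfit S C0 t0 e i = wproj S w {r+1..h} *v t0"
    and N_const: "wproj S w {h+1..CARD('n)} *v misfit S C0 t0 e i = wproj S w {h+1..CARD('n)} *v t0"
    for t0 e i
    using rh d_zero by (auto intro!: wproj_misfit_eq_initial[OF C0 d_nonneg])
  show ?thesis
  proof (intro ballI conjI)
    fix j assume j: "j \<in> {1..J}"
    define c where "c = (\<Sum>k\<in>{1..r}. norm (S *v w k) * (\<bar>w k \<bullet> (H *v v0 j - y)\<bar> / d k + 1))"
    have "(\<integral>\<^sup>+\<omega>. ennreal (norm (P *v \<theta> i j \<omega>)) \<partial>M) \<le> ennreal (c / sqrt (real i))"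
      if "1 \<le> i" for i
      unfolding P_def \<theta>_def C0_def[symmetric] c_def using rh d_pos that
      by (intro nn_integral_norm_wproj_misfit_le[OF C0 d_nonneg prob indep gauss j]) auto
    then have "\<forall>\<^sub>F i in sequentially.
        (\<integral>\<^sup>+\<omega>. ennreal (norm (P *v \<theta> i j \<omega>)) \<partial>M) \<le> ennreal (c / sqrt (real i))"
      by (rule eventually_sequentiallyI)
    then show "\<exists>c. \<forall>\<^sub>F i in sequentially.
        (\<integral>\<^sup>+\<omega>. ennreal (norm (P *v \<theta> i j \<omega>)) \<partial>M) \<le> ennreal (c / sqrt (real i))"
      by (rule exI)
    show "\<forall>i. \<forall>\<omega>\<in>space M. Q *v \<theta> i j \<omega> = Q *v \<theta> 0 j \<omega>"
      unfolding Q_def \<theta>_def C0_def[symmetric] Q_const misfit.simps(1) by simp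
    show "\<forall>i. \<forall>\<omega>\<in>space M. N *v \<theta> i j \<omega> = N *v \<theta> 0 j \<omega>"
      unfolding N_def \<theta>_def C0_def[symmetric] N_const misfit.simps(1) by simp
  qed
qed

end
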